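(* The following identities hold: $$\sum_{n=1}^{\infty}\frac{1}{4^n(2n+1)^2}\frac{\binom{4n}{2n}}{\binom{2n}{n}}=3-2\sqrt{2},\qquad \sum_{n=1}^{\infty}\frac{1}{4^n(2n+1)(2n+3)}\frac{\binom{4n}{2n}}{\binom{2n+2}{n+1}}=\frac{11-7\sqrt{2}}{30},$$ $$\sum_{n=1}^{\infty}\frac{1}{4^n(2n+1)(2n+5)}\frac{\binom{4n}{2n}}{\binom{2n+4}{n+2}}=\frac{172-107\sqrt{2}}{2520},\qquad \sum_{n=1}^{\infty}\frac{1}{4^n(2n+1)(2n+7)}\frac{\binom{4n}{2n}}{\binom{2n+6}{n+3}}=\frac{6808-4175\sqrt{2}}{480480}.$$ *)

theory Defs
  imports Complex_Main
begin

end

(*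
  Let a n = C(4n,2n) / (4^n C(2n,n)) and P_N(x) = prod_{k=1..N} (1 - x^2/k^2), the partial
  products of Euler's sine product. The ratio a (n+1) / a n = 1 - 1 / (4 (2n+1)^2) is the factor
  of P(1/2) at index 2n+1, while its factor at index 2n+2 equals the factor of P(1/4) at n+1.
  Hence a n = P_2n(1/2) / P_n(1/4), which tends to (sin(pi/2)/(pi/2)) / (sin(pi/4)/(pi/4)) = 1/sqrt 2.
  Each summand is a n times a rational function of n, and Gosper's algorithm yields a rational R
  with R (n+1) a (n+1) - R n a n equal to the summand. Each series therefore telescopes to
  (lim R) / sqrt 2 - R 1 a 1, where a 1 = 3/4.
*)
theory Submission
  imports Defs "HOL-Analysis.Gamma_Function" "HOL-Real_Asymp.Real_Asymp"
begin

lemma central_binomial_Suc: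
  "real ((2 * Suc n) choose Suc n) = real ((2 * n) choose n) * (2 * (2 * real n + 1) / real (Suc n))"
proof -
  have central: "real ((2 * m) choose m) = fact (2 * m) / fact m ^ 2" for m
    by (simp add: binomial_fact power2_eq_square mult_2)
  have "fact (2 * Suc n) = (fact (2 * n) :: real) * ((2 * n + 1) * (2 * n + 2))"
    by (simp add: algebra_simps)
  moreover have "fact (Suc n) = (fact n :: real) * (n + 1)"
    by simp
  ultimately show ?thesis
    unfolding central by (simp add: divide_simps) (simp add: algebra_simps power2_eq_square)
qed

lemma central_binomial_add:
  "real ((2 * (n + k)) choose (n + k))
     = real ((2 * n) choose n) * (\<Prod>j<k. 2 * (2 * real (n + j) + 1) / real (n + j + 1))"
proof (induction k)
  case (Suc k)
  have "real (Suc (n + k)) * real ((2 * Suc (n + k)) choose Suc (n + k))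
          = 2 * (2 * real (n + k) + 1) * real ((2 * (n + k)) choose (n + k))"
    using central_binomial_Suc[of "n + k"] by simp
  then show ?case
    using Suc.IH by (simp add: field_simps)
qed simp

definition binom_quot :: "nat \<Rightarrow> real" where
  "binom_quot n = real ((4 * n) choose (2 * n)) / (4 ^ n * real ((2 * n) choose n))"

lemma binom_quot_Suc:
  "binom_quot (Suc n) = binom_quot n * ((4 * real n + 1) * (4 * real n + 3) / (4 * (2 * real n + 1) ^ 2))"
proof -
  define m where "m = 2 * n"
  have "4 * Suc n = 2 * (m + 2)" "2 * Suc n = m + 2" "4 * n = 2 * m"
    unfolding m_def by simp_all
  then have top: "real ((4 * Suc n) choose (2 * Suc n))
      = real ((4 * n) choose (2 * n)) * (\<Prod>j<2. 2 * (2 * real (m + j) + 1) / real (m + j + 1))"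
    using central_binomial_add[of m 2] by (simp only: m_def)
  have bot: "real ((2 * Suc n) choose Suc n) = real ((2 * n) choose n) * (2 * (2 * real n + 1) / real (Suc n))"
    by (rule central_binomial_Suc)
  have "binom_quot (Suc n) = binom_quot n
      * ((\<Prod>j<2. 2 * (2 * real (m + j) + 1) / real (m + j + 1)) / (4 * (2 * (2 * real n + 1) / real (Suc n))))"
    unfolding binom_quot_def top bot power_Suc by (simp only: times_divide_times_eq mult_ac)
  also have "(\<Prod>j<2. 2 * (2 * real (m + j) + 1) / real (m + j + 1)) / (4 * (2 * (2 * real n + 1) / real (Suc n)))
      = (4 * real n + 1) * (4 * real n + 3) / (4 * (2 * real n + 1) ^ 2)"
    unfolding m_def by (simp add: lessThan_nat_numeral divide_simps) (simp add: algebra_simps power2_eq_square)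
  finally show ?thesis .
qed

definition sin_partial_product :: "real \<Rightarrow> nat \<Rightarrow> real" where
  "sin_partial_product x n = (\<Prod>k=1..n. 1 - x\<^sup>2 / real k ^ 2)"

lemma sin_partial_product_Suc:
  "sin_partial_product x (Suc n) = sin_partial_product x n * (1 - x\<^sup>2 / real (Suc n) ^ 2)"
  by (simp add: sin_partial_product_def)

lemma sin_product_factor_nonzero:
  assumes "\<bar>x\<bar> < 1" "k \<noteq> 0"
  shows "1 - x\<^sup>2 / real k ^ 2 \<noteq> 0"
proof -
  have "x\<^sup>2 < 1" "1 \<le> real k ^ 2"
    using assms by (simp_all add: abs_square_less_1)
  then show ?thesis
    by (simp add: field_simps)
qed

lemma tendsto_sin_partial_product:
  "x \<noteq> 0 \<Longrightarrow> sin_partial_product x \<longlonglongrightarrow> sin (pi * x) / (pi * x)"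
  unfolding sin_partial_product_def by (rule sin_product_formula_real')

lemma binom_quot_eq_sin_partial_products:
  "binom_quot n = sin_partial_product (1/2) (2 * n) / sin_partial_product (1/4) n"
proof (induction n)
  case 0
  show ?case
    by (simp add: binom_quot_def sin_partial_product_def)
next
  case (Suc n)
  define f where "f = 1 - (1/2)\<^sup>2 / real (2 * n + 1) ^ 2"
  define g where "g = 1 - (1/4)\<^sup>2 / real (Suc n) ^ 2"
  have "g \<noteq> 0"
    unfolding g_def by (rule sin_product_factor_nonzero) simp_all
  have "1 - (1/2)\<^sup>2 / real (2 * n + 2) ^ 2 = g"
    unfolding g_def by (simp add: field_simps power2_eq_square)
  then have "sin_partial_product (1/2) (2 * Suc n) = sin_partial_product (1/2) (2 * n) * f * g"
    unfolding f_def by (simp add: sin_partial_product_Suc)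
  moreover have "sin_partial_product (1/4) (Suc n) = sin_partial_product (1/4) n * g"
    unfolding g_def by (rule sin_partial_product_Suc)
  moreover have "f = (4 * real n + 1) * (4 * real n + 3) / (4 * (2 * real n + 1) ^ 2)"
    unfolding f_def by (simp add: divide_simps) (simp add: algebra_simps power2_eq_square)
  ultimately show ?case
    using Suc.IH \<open>g \<noteq> 0\<close> by (simp add: binom_quot_Suc)
qed

lemma binom_quot_tendsto: "binom_quot \<longlonglongrightarrow> 1 / sqrt 2"
proof -
  have "(\<lambda>n. sin_partial_product (1/2) (2 * n)) \<longlonglongrightarrow> sin (pi / 2) / (pi / 2)"
    using LIMSEQ_subseq_LIMSEQ[OF tendsto_sin_partial_product[of "1/2"], of "\<lambda>n. 2 * n"]
    by (simp add: strict_mono_def o_def)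
  moreover have "sin_partial_product (1/4) \<longlonglongrightarrow> sin (pi / 4) / (pi / 4)"
    using tendsto_sin_partial_product[of "1/4"] by simp
  ultimately have "binom_quot \<longlonglongrightarrow> (sin (pi / 2) / (pi / 2)) / (sin (pi / 4) / (pi / 4))"
    unfolding binom_quot_eq_sin_partial_products by (rule tendsto_divide) (simp add: sin_45)
  also have "(sin (pi / 2) / (pi / 2)) / (sin (pi / 4) / (pi / 4)) = 1 / sqrt 2"
    by (simp add: sin_45 field_simps)
  finally show ?thesis .
qed

lemma binom_quot_telescoping_sums:
  fixes R s :: "nat \<Rightarrow> real"
  assumes gosper: "\<And>n. R (Suc n) * ((4 * real n + 1) * (4 * real n + 3) / (4 * (2 * real n + 1) ^ 2)) - R n = s n"
    and "R \<longlonglongrightarrow> c"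
  shows "(\<lambda>n. s (Suc n) * binom_quot (Suc n)) sums (c / sqrt 2 - 3/4 * R 1)"
proof -
  define G where "G n = R (Suc n) * binom_quot (Suc n)" for n
  have "G (Suc n) - G n = s (Suc n) * binom_quot (Suc n)" for n
  proof -
    have "G (Suc n) - G n = binom_quot (Suc n) * (R (Suc (Suc n))
        * ((4 * real (Suc n) + 1) * (4 * real (Suc n) + 3) / (4 * (2 * real (Suc n) + 1) ^ 2)) - R (Suc n))"
      unfolding G_def binom_quot_Suc[of "Suc n"] by (simp add: algebra_simps)
    then show ?thesis
      unfolding gosper by simp
  qed
  moreover have "G \<longlonglongrightarrow> c * (1 / sqrt 2)"
    unfolding G_def using assms(2) binom_quot_tendsto by (intro tendsto_mult LIMSEQ_Suc)
  ultimately have "(\<lambda>n. s (Suc n) * binom_quot (Suc n)) sums (c * (1 / sqrt 2) - G 0)"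
    using telescope_sums[of G] by simp
  moreover have "G 0 = 3/4 * R 1"
    using binom_quot_Suc[of 0] by (simp add: G_def binom_quot_def)
  ultimately show ?thesis
    by simp
qed

definition binom_series_term :: "nat \<Rightarrow> nat \<Rightarrow> real" where
  "binom_series_term k n = 1 / (4 ^ n * (2 * real n + 1) * (2 * real n + 2 * real k + 1))
     * (real ((4 * n) choose (2 * n)) / real ((2 * (n + k)) choose (n + k)))"

lemma binom_series_term_eq:
  "binom_series_term k n = binom_quot n / ((2 * real n + 1) * (2 * real n + 2 * real k + 1)
     * (\<Prod>j<k. 2 * (2 * real (n + j) + 1) / real (n + j + 1)))"
  unfolding binom_series_term_def binom_quot_def central_binomial_add by (simp add: field_simps)

lemma binom_series_sums:
  fixes R :: "nat \<Rightarrow> real"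
  assumes "\<And>n. R (Suc n) * ((4 * real n + 1) * (4 * real n + 3) / (4 * (2 * real n + 1) ^ 2)) - R n
      = 1 / ((2 * real n + 1) * (2 * real n + 2 * real k + 1) * (\<Prod>j<k. 2 * (2 * real (n + j) + 1) / real (n + j + 1)))"
    and "R \<longlonglongrightarrow> c"
  shows "(\<lambda>n. binom_series_term k (Suc n)) sums (c / sqrt 2 - 3/4 * R 1)"
  using binom_quot_telescoping_sums[OF assms] by (simp add: binom_series_term_eq)

lemma binom_series_sums_0: "(\<lambda>n. binom_series_term 0 (Suc n)) sums (3 - 2 * sqrt 2)"
proof -
  have "(\<lambda>n. binom_series_term 0 (Suc n)) sums (- 4 / sqrt 2 - 3/4 * - 4)"
    by (rule binom_series_sums[where R = "\<lambda>_. - 4"])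
      (simp_all add: divide_simps, simp add: algebra_simps power2_eq_square)
  also have "- 4 / sqrt 2 - 3/4 * - 4 = 3 - 2 * sqrt 2"
    by (simp add: field_simps)
  finally show ?thesis .
qed

text \<open>The rational functions R below are the certificates found by Gosper's algorithm.\<close>

lemma binom_series_sums_1: "(\<lambda>n. binom_series_term 1 (Suc n)) sums ((11 - 7 * sqrt 2) / 30)"
proof -
  define R where "R n = - 7/15 - 1/15 / (2 * real n + 1)" for n
  have "(\<lambda>n. binom_series_term 1 (Suc n)) sums (- 7/15 / sqrt 2 - 3/4 * R 1)"
  proof (rule binom_series_sums)
    show "R \<longlonglongrightarrow> - 7/15"
      unfolding R_def by real_asymp
  qed (simp add: R_def lessThan_nat_numeral divide_simps, simp add: algebra_simps power2_eq_square)
  also have "- 7/15 / sqrt 2 - 3/4 * R 1 = (11 - 7 * sqrt 2) / 30"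
    unfolding R_def by (simp add: field_simps)
  finally show ?thesis .
qed

lemma binom_series_sums_2: "(\<lambda>n. binom_series_term 2 (Suc n)) sums ((172 - 107 * sqrt 2) / 2520)"
proof -
  define R where "R n = - 107/1260 - 37/2520 / (2 * real n + 1) - 1/168 / (2 * real n + 3)" for n
  have "(\<lambda>n. binom_series_term 2 (Suc n)) sums (- 107/1260 / sqrt 2 - 3/4 * R 1)"
  proof (rule binom_series_sums)
    show "R \<longlonglongrightarrow> - 107/1260"
      unfolding R_def by real_asymp
  qed (simp add: R_def lessThan_nat_numeral divide_simps, simp add: algebra_simps power2_eq_square)
  also have "- 107/1260 / sqrt 2 - 3/4 * R 1 = (172 - 107 * sqrt 2) / 2520"
    unfolding R_def by (simp add: field_simps)
  finally show ?thesis .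
qed

lemma binom_series_sums_3: "(\<lambda>n. binom_series_term 3 (Suc n)) sums ((6808 - 4175 * sqrt 2) / 480480)"
proof -
  define R where "R n = - 835/48048 - 1247/384384 / (2 * real n + 1) - 101/64064 / (2 * real n + 3)
      - 15/18304 / (2 * real n + 5)" for n
  have "(\<lambda>n. binom_series_term 3 (Suc n)) sums (- 835/48048 / sqrt 2 - 3/4 * R 1)"
  proof (rule binom_series_sums)
    show "R \<longlonglongrightarrow> - 835/48048"
      unfolding R_def by real_asymp
  qed (simp add: R_def lessThan_nat_numeral divide_simps, simp add: algebra_simps power2_eq_square)
  also have "- 835/48048 / sqrt 2 - 3/4 * R 1 = (6808 - 4175 * sqrt 2) / 480480"
    unfolding R_def by (simp add: field_simps)
  finally show ?thesis .
qed

theorem corollary4p0p1: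
  shows "((\<lambda>k. let n = Suc k in
            1 / (4 ^ n * (2 * real n + 1) ^ 2) * (real ((4*n) choose (2*n)) / real ((2*n) choose n)))
           sums (3 - 2 * sqrt 2)) \<and>
         ((\<lambda>k. let n = Suc k in
            1 / (4 ^ n * (2 * real n + 1) * (2 * real n + 3)) * (real ((4*n) choose (2*n)) / real ((2*n+2) choose (n+1))))
           sums ((11 - 7 * sqrt 2) / 30)) \<and>
         ((\<lambda>k. let n = Suc k in
            1 / (4 ^ n * (2 * real n + 1) * (2 * real n + 5)) * (real ((4*n) choose (2*n)) / real ((2*n+4) choose (n+2))))
           sums ((172 - 107 * sqrt 2) / 2520)) \<and>
         ((\<lambda>k. let n = Suc k in
            1 / (4 ^ n * (2 * real n + 1) * (2 * real n + 7)) * (real ((4*n) choose (2*n)) / real ((2*n+6) choose (n+3))))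
           sums ((6808 - 4175 * sqrt 2) / 480480))"
proof -
  have "binom_series_term 0 = (\<lambda>n. 1 / (4 ^ n * (2 * real n + 1) ^ 2) * (real ((4*n) choose (2*n)) / real ((2*n) choose n)))"
    and "binom_series_term 1 = (\<lambda>n. 1 / (4 ^ n * (2 * real n + 1) * (2 * real n + 3)) * (real ((4*n) choose (2*n)) / real ((2*n+2) choose (n+1))))"
    and "binom_series_term 2 = (\<lambda>n. 1 / (4 ^ n * (2 * real n + 1) * (2 * real n + 5)) * (real ((4*n) choose (2*n)) / real ((2*n+4) choose (n+2))))"
    and "binom_series_term 3 = (\<lambda>n. 1 / (4 ^ n * (2 * real n + 1) * (2 * real n + 7)) * (real ((4*n) choose (2*n)) / real ((2*n+6) choose (n+3))))"
    by (simp_all add: fun_eq_iff binom_series_term_def power2_eq_square mult.assoc numeral_eq_Suc del: binomial_Suc_Suc)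
  then show ?thesis
    using binom_series_sums_0 binom_series_sums_1 binom_series_sums_2 binom_series_sums_3
    unfolding Let_def by simp
qed

end
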